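(* The rank one extreme contractions in $\mathbb{L}(\ell_4^2)$ are exactly the operators whose matrix representations with respect to the standard ordered basis are of the form $\begin{bmatrix} x_1 & 0\\ y_1 & 0\end{bmatrix}$ or $\begin{bmatrix} 0 & x_1\\ 0 & y_1\end{bmatrix}$, where $x_1y_1\neq0$ and $x_1^4+y_1^4=1$.
   Context: $\ell_4^2$ is $\mathbb{R}^2$ with norm $\|(a,b)\|=(a^4+b^4)^{1/4}$, and $\mathbb{L}(\ell_4^2)$ the space of linear operators on it with the operator norm. An extreme contraction is a norm one operator that is an extreme point of the closed unit ball of $\mathbb{L}(\ell_4^2)$. *)

theory Defs
  imports "HOL-Analysis.Analysis"
begin

definition l4norm :: "real^2 \<Rightarrow> real" where
  "l4norm v = root 4 ((v$1)^4 + (v$2)^4)"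

text \<open>Operator norm on L(l_4^2); operators are identified with their matrices
  w.r.t. the standard ordered basis, acting by matrix-vector multiplication.\<close>
definition opnorm4 :: "real^2^2 \<Rightarrow> real" where
  "opnorm4 A = Sup {l4norm (A *v v) | v. l4norm v = 1}"

definition extreme_contraction :: "real^2^2 \<Rightarrow> bool" where
  "extreme_contraction A \<longleftrightarrow>
     opnorm4 A = 1 \<and> A extreme_point_of {B. opnorm4 B \<le> 1}"

end

theory Submission
  imports Defs
begin

text \<open>
  Write \<open>N v = v\<^sub>1\<^sup>4 + v\<^sub>2\<^sup>4\<close>; a matrix \<open>A\<close> lies in the unit ball iff \<open>N (A v) \<le> N v\<close> for all \<open>v\<close>.
  A rank one operator \<open>u f\<^sup>T\<close> of norm one attains its norm at a unit vector \<open>p\<close>; after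
  rescaling, \<open>f\<close> is a norming functional at \<open>p\<close>, and since the \<open>\<ell>\<^sub>4\<close> sphere is smooth,
  \<open>f = p\<^sup>3\<close> (coordinatewise). If both coordinates of \<open>p\<close> are nonzero, then
  \<open>N v - \<langle>p\<^sup>3, v\<rangle>\<^sup>4 = \<langle>p\<^sup>\<bottom>, v\<rangle>\<^sup>2 Q v\<close> with \<open>Q\<close> positive definite, and this slack absorbs the
  perturbations \<open>\<plusminus>t (u\<^sup>3)\<^sup>\<bottom> (p\<^sup>\<bottom>)\<^sup>T\<close> for small \<open>t\<close>, so the operator is not extreme.
  Otherwise the operator has a single nonzero column \<open>(x, y)\<close>. If \<open>x y = 0\<close> it is the
  average of two isometries. If \<open>x y \<noteq> 0\<close> it is extreme: by strict convexity of \<open>N\<close>, every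
  contraction on a segment through it agrees with it on the basis vector where the norm is
  attained, and smoothness of the sphere at \<open>(x, y)\<close> forces the other column to vanish.
\<close>

lemma other_index: obtains j :: 2 where "j \<noteq> k"
  using exhaust_2[of k] by (metis num.simps(4) numeral_eq_iff one_neq_zero zero_neq_numeral)

lemma exists_2: "(\<exists>i::2. P i) \<longleftrightarrow> P 1 \<or> P 2"
  using forall_2[of "\<lambda>i. \<not> P i"] by blast

lemma index_cases: "j \<noteq> k \<Longrightarrow> i = j \<or> i = k" for i j k :: 2
  using exhaust_2[of i] exhaust_2[of j] exhaust_2[of k] by metis

definition l4pow :: "real^2 \<Rightarrow> real" where
  "l4pow v = (v$1)^4 + (v$2)^4"

definition contractive :: "real^2^2 \<Rightarrow> bool" where
  "contractive A \<longleftrightarrow> (\<forall>v. l4pow (A *v v) \<le> l4pow v)"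

lemma l4norm_eq_root: "l4norm v = root 4 (l4pow v)"
  by (simp add: l4norm_def l4pow_def)

lemma l4pow_nonneg: "0 \<le> l4pow v"
  by (simp add: l4pow_def)

lemma l4pow_eq_0_iff: "l4pow v = 0 \<longleftrightarrow> v = 0"
proof -
  have "0 \<le> (v$1)^4" "0 \<le> (v$2)^4" by simp_all
  hence "(v$1)^4 + (v$2)^4 = 0 \<longleftrightarrow> (v$1)^4 = 0 \<and> (v$2)^4 = 0" by linarith
  thus ?thesis by (simp add: l4pow_def vec_eq_iff forall_2)
qed

lemma l4pow_scaleR: "l4pow (c *\<^sub>R v) = c^4 * l4pow v"
  by (simp add: l4pow_def power_mult_distrib algebra_simps)

lemma component_pow4_le_l4pow: "(v$i)^4 \<le> l4pow v"
  using exhaust_2[of i] by (auto simp: l4pow_def)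

lemma l4pow_other_index:
  fixes j k :: 2
  assumes "j \<noteq> k"
  shows "l4pow v = (v$k)^4 + (v$j)^4"
  using assms exhaust_2[of j] exhaust_2[of k] by (auto simp: l4pow_def)

lemma l4norm_le_1_iff: "l4norm v \<le> 1 \<longleftrightarrow> l4pow v \<le> 1"
  by (simp add: l4norm_eq_root)

lemma l4norm_eq_1_iff: "l4norm v = 1 \<longleftrightarrow> l4pow v = 1"
  by (simp add: l4norm_eq_root)

lemma compact_l4pow_sphere: "compact {v. l4pow v = 1}"
proof (rule compact_eq_bounded_closed[THEN iffD2], rule conjI)
  show "bounded {v. l4pow v = 1}"
    unfolding bounded_iff
  proof (intro exI[of _ 2] ballI)
    fix v :: "real^2" assume "v \<in> {v. l4pow v = 1}"
    hence "\<bar>v$i\<bar>^4 \<le> 1" for i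
      using component_pow4_le_l4pow[of v i] by simp
    hence le1: "\<bar>v$i\<bar> \<le> 1" for i
      using power_le_one_iff[of "\<bar>v$i\<bar>" 4] by simp
    have "norm v \<le> \<bar>v$1\<bar> + \<bar>v$2\<bar>"
      using norm_le_l1_cart[of v] by (simp add: sum_2)
    thus "norm v \<le> 2"
      using le1[of 1] le1[of 2] by linarith
  qed
  show "closed {v. l4pow v = 1}"
    unfolding l4pow_def by (intro closed_Collect_eq continuous_intros)
qed

lemma opnorm4_attained:
  fixes A :: "real^2^2"
  obtains v where "l4pow v = 1" "opnorm4 A = l4norm (A *v v)"
    "\<And>w. l4pow w = 1 \<Longrightarrow> l4norm (A *v w) \<le> l4norm (A *v v)"
proof -
  have "continuous_on {v. l4pow v = 1} (\<lambda>v. l4norm (A *v v))"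
    unfolding l4norm_def by (intro continuous_intros)
  moreover have "{v. l4pow v = 1} \<noteq> {}"
  proof -
    have "l4pow (axis 1 1) = 1" by (simp add: l4pow_def axis_def)
    thus ?thesis by blast
  qed
  ultimately obtain v where v: "l4pow v = 1" "\<And>w. l4pow w = 1 \<Longrightarrow> l4norm (A *v w) \<le> l4norm (A *v v)"
    using continuous_attains_sup[OF compact_l4pow_sphere] by blast
  have "opnorm4 A = l4norm (A *v v)"
    unfolding opnorm4_def l4norm_eq_1_iff
    by (rule cSup_eq_maximum) (use v in auto)
  with v that show thesis by blast
qed

lemma contractive_iff_on_sphere:
  "contractive A \<longleftrightarrow> (\<forall>v. l4pow v = 1 \<longrightarrow> l4pow (A *v v) \<le> 1)"
proof (intro iffI allI impI)
  assume H: "\<forall>v. l4pow v = 1 \<longrightarrow> l4pow (A *v v) \<le> 1"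
  show "contractive A"
    unfolding contractive_def
  proof
    fix v :: "real^2"
    show "l4pow (A *v v) \<le> l4pow v"
    proof (cases "v = 0")
      case False
      define r where "r = root 4 (l4pow v)"
      have "l4pow v > 0"
        using False l4pow_nonneg l4pow_eq_0_iff by (metis order_le_less)
      hence r: "r > 0" "l4pow v = r^4"
        by (simp_all add: r_def)
      have "l4pow ((1/r) *\<^sub>R v) = 1"
        using r by (simp add: l4pow_scaleR power_divide)
      hence "l4pow ((1/r) *\<^sub>R (A *v v)) \<le> 1"
        using H by (simp add: matrix_vector_mult_scaleR[symmetric] del: matrix_vector_mult_scaleR)
      thus ?thesis
        using r by (simp add: l4pow_scaleR power_divide divide_le_eq)
    qed simp
  qed
qed (auto simp: contractive_def intro: order_trans)

lemma opnorm4_le_1_iff: "opnorm4 A \<le> 1 \<longleftrightarrow> contractive A"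
proof -
  obtain v where v: "l4pow v = 1" "opnorm4 A = l4norm (A *v v)"
    "\<And>w. l4pow w = 1 \<Longrightarrow> l4norm (A *v w) \<le> l4norm (A *v v)"
    using opnorm4_attained[of A] by blast
  show ?thesis
    unfolding contractive_iff_on_sphere v(2) l4norm_le_1_iff[symmetric]
    using v(1,3) by (meson order_trans)
qed

lemma opnorm4_eq_1_iff:
  "opnorm4 A = 1 \<longleftrightarrow> contractive A \<and> (\<exists>v. l4pow v = 1 \<and> l4pow (A *v v) = 1)"
proof -
  obtain v where v: "l4pow v = 1" "opnorm4 A = l4norm (A *v v)"
    "\<And>w. l4pow w = 1 \<Longrightarrow> l4norm (A *v w) \<le> l4norm (A *v v)"
    using opnorm4_attained[of A] by blast
  show ?thesis
    using v opnorm4_le_1_iff[of A] unfolding l4norm_eq_1_iff[symmetric]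
    by (metis order.antisym)
qed

lemma power4_convex:
  fixes p q t :: real
  assumes "0 \<le> t" "t \<le> 1"
  shows "((1-t)*p + t*q)^4 \<le> (1-t)*p^4 + t*q^4"
    and "0 < t \<Longrightarrow> t < 1 \<Longrightarrow> ((1-t)*p + t*q)^4 = (1-t)*p^4 + t*q^4 \<Longrightarrow> p = q"
proof -
  define m where "m = ((1-t)*p + t*q)^2"
  define M where "M = (1-t)*p^2 + t*q^2"
  have tt: "0 \<le> t*(1-t)" using assms by simp
  have gap: "M - m = t*(1-t)*(p-q)^2"
    by (simp add: m_def M_def algebra_simps power2_eq_square)
  moreover have "0 \<le> t*(1-t)*(p-q)^2"
    using tt by simp
  ultimately have mM: "m \<le> M" by linarith
  have "(1-t)*p^4 + t*q^4 - M^2 = t*(1-t)*(p^2-q^2)^2"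
    by (simp add: M_def algebra_simps power2_eq_square power4_eq_xxxx)
  moreover have "0 \<le> t*(1-t)*(p^2-q^2)^2"
    using tt by simp
  ultimately have MR: "M^2 \<le> (1-t)*p^4 + t*q^4" by linarith
  have m0: "0 \<le> m" by (simp add: m_def)
  have mm: "m^2 \<le> M^2" using m0 mM by (simp add: power_mono)
  have q4: "((1-t)*p + t*q)^4 = m^2" by (simp add: m_def flip: power_mult)
  show "((1-t)*p + t*q)^4 \<le> (1-t)*p^4 + t*q^4" using q4 mm MR by linarith
  assume t: "0 < t" "t < 1" and eq: "((1-t)*p + t*q)^4 = (1-t)*p^4 + t*q^4"
  have "m^2 = M^2" using q4 mm MR eq by linarith
  hence "m = M" using m0 mM by (metis order.trans power2_eq_iff_nonneg)
  thus "p = q" using gap t by simp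
qed

lemma l4pow_strictly_convex:
  assumes "l4pow p \<le> 1" "l4pow q \<le> 1" "0 < t" "t < 1" "l4pow ((1-t) *\<^sub>R p + t *\<^sub>R q) = 1"
  shows "p = q"
proof -
  have t: "0 \<le> t" "t \<le> 1" using assms(3,4) by auto
  let ?gap = "\<lambda>i. (1-t)*(p$i)^4 + t*(q$i)^4 - ((1-t)*p$i + t*q$i)^4"
  have gap_nonneg: "0 \<le> ?gap i" for i
    using power4_convex(1)[OF t] by simp
  have "?gap 1 + ?gap 2 = (1-t)*l4pow p + t*l4pow q - l4pow ((1-t) *\<^sub>R p + t *\<^sub>R q)"
    by (simp add: l4pow_def right_diff_distrib distrib_left)
  also have "\<dots> \<le> 0"
    using assms convex_bound_le[of "l4pow p" 1 "l4pow q" "1-t" t] by simp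
  finally have "?gap 1 = 0" "?gap 2 = 0"
    using gap_nonneg[of 1] gap_nonneg[of 2] by linarith+
  hence "((1-t)*p$i + t*q$i)^4 = (1-t)*(p$i)^4 + t*(q$i)^4" if "i = 1 \<or> i = 2" for i
    using that by auto
  hence "p$i = q$i" for i
    using power4_convex(2)[OF t assms(3,4)] exhaust_2[of i] by blast
  thus ?thesis by (simp add: vec_eq_iff)
qed

lemma nonpos_at_0_if_nonpos_right:
  fixes g :: "real \<Rightarrow> real"
  assumes "isCont g 0" "\<And>s. s > 0 \<Longrightarrow> g s \<le> 0"
  shows "g 0 \<le> 0"
proof (rule tendsto_upperbound)
  show "(g \<longlongrightarrow> g 0) (at_right 0)"
    using assms(1) by (simp add: isCont_def filterlim_at_split)
  show "eventually (\<lambda>s. g s \<le> 0) (at_right 0)"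
    using assms(2) by (auto simp: eventually_at_right_field intro: exI[of _ 1])
qed simp

lemma quartic_nonpos_coeffs:
  fixes a b c d :: real
  assumes nonpos: "\<And>s. a* s + b* s^2 + c* s^3 + d* s^4 \<le> 0"
  shows "a = 0" "b \<le> 0"
proof -
  have "(\<lambda>s. a + b* s + c* s^2 + d* s^3) 0 \<le> 0"
  proof (rule nonpos_at_0_if_nonpos_right)
    show "isCont (\<lambda>s. a + b* s + c* s^2 + d* s^3) 0" by (intro continuous_intros)
    fix s :: real assume "s > 0"
    moreover have "s * (a + b* s + c* s^2 + d* s^3) \<le> 0"
      using nonpos[of s] by (simp add: algebra_simps power2_eq_square power3_eq_cube power4_eq_xxxx)
    ultimately show "a + b* s + c* s^2 + d* s^3 \<le> 0"
      by (simp add: mult_le_0_iff)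
  qed
  moreover have "(\<lambda>s. -a + b* s - c* s^2 + d* s^3) 0 \<le> 0"
  proof (rule nonpos_at_0_if_nonpos_right)
    show "isCont (\<lambda>s. -a + b* s - c* s^2 + d* s^3) 0" by (intro continuous_intros)
    fix s :: real assume "s > 0"
    moreover have "s * (-a + b* s - c* s^2 + d* s^3) \<le> 0"
      using nonpos[of "-s"] by (simp add: algebra_simps power2_eq_square power3_eq_cube power4_eq_xxxx)
    ultimately show "-a + b* s - c* s^2 + d* s^3 \<le> 0"
      by (simp add: mult_le_0_iff)
  qed
  ultimately show a: "a = 0" by simp
  have "(\<lambda>s. b + c* s + d* s^2) 0 \<le> 0"
  proof (rule nonpos_at_0_if_nonpos_right)
    show "isCont (\<lambda>s. b + c* s + d* s^2) 0" by (intro continuous_intros)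
    fix s :: real assume "s > 0"
    moreover have "s^2 * (b + c* s + d* s^2) \<le> 0"
      using nonpos[of s] a by (simp add: algebra_simps power2_eq_square power3_eq_cube power4_eq_xxxx)
    ultimately show "b + c* s + d* s^2 \<le> 0"
      by (simp add: mult_le_0_iff)
  qed
  thus "b \<le> 0" by simp
qed

definition outer :: "real^'m \<Rightarrow> real^'n \<Rightarrow> real^'n^'m" where
  "outer u f = (\<chi> i j. u$i * f$j)"

lemma outer_mult_vec [simp]: "outer u f *v v = (f \<bullet> v) *\<^sub>R u"
  by (simp add: outer_def matrix_vector_mult_def inner_vec_def vec_eq_iff sum_distrib_left mult_ac)

lemma outer_rescale: "c \<noteq> 0 \<Longrightarrow> outer (c *\<^sub>R u) ((1/c) *\<^sub>R f) = outer u f"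
  by (simp add: outer_def vec_eq_iff)

lemma outer_eq_0_iff: "outer u f = 0 \<longleftrightarrow> u = 0 \<or> f = 0"
proof
  assume "outer u f = 0"
  hence "(f \<bullet> f) *\<^sub>R u = 0" by (metis outer_mult_vec matrix_vector_mult_0)
  thus "u = 0 \<or> f = 0" by auto
qed (auto simp: outer_def vec_eq_iff)

lemma inner_real2: "f \<bullet> v = f$1 * v$1 + f$2 * v$2" for f v :: "real^2"
  by (simp add: inner_vec_def sum_2)

lemma rank_one_iff: "rank A = 1 \<longleftrightarrow> A \<noteq> 0 \<and> det A = 0" for A :: "real^2^2"
proof -
  have "det A = 0 \<longleftrightarrow> rank A < 2" using det_eq_0_rank[of A] by simp
  moreover have "rank A = 0 \<longleftrightarrow> A = 0" by (rule rank_eq_0)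
  moreover have "rank A \<le> 2" using rank_bound[of A] by simp
  ultimately show ?thesis by linarith
qed

lemma rank_outer: "u \<noteq> 0 \<Longrightarrow> f \<noteq> 0 \<Longrightarrow> rank (outer u f) = 1" for u f :: "real^2"
  unfolding rank_one_iff by (auto simp: det_2 outer_def vec_eq_iff)

lemma proportional_if_cross_zero:
  fixes r s :: "real^2"
  assumes "r$1 * s$2 = r$2 * s$1" "r \<noteq> 0"
  obtains c where "s = c *\<^sub>R r"
proof (cases "r$1 = 0")
  case True
  hence "r$2 \<noteq> 0" using assms(2) by (auto simp: vec_eq_iff forall_2)
  hence "s = (s$2 / r$2) *\<^sub>R r" using assms(1) True by (auto simp: vec_eq_iff forall_2)
  thus thesis by (rule that)
next
  case False
  hence "s = (s$1 / r$1) *\<^sub>R r" using assms(1) by (auto simp: vec_eq_iff forall_2 field_simps)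
  thus thesis by (rule that)
qed

lemma rank_one_imp_outer:
  fixes A :: "real^2^2"
  assumes "rank A = 1"
  obtains u f where "A = outer u f"
proof (cases "A$1 = 0")
  case True
  hence "A = outer (axis 2 1) (A$2)" by (auto simp: outer_def vec_eq_iff forall_2 axis_def)
  thus thesis by (rule that)
next
  case False
  have "A$1$1 * A$2$2 = A$1$2 * A$2$1" using assms unfolding rank_one_iff by (simp add: det_2)
  then obtain c where "A$2 = c *\<^sub>R A$1" using False by (rule proportional_if_cross_zero)
  hence "A = outer (vector [1, c]) (A$1)" by (auto simp: outer_def vec_eq_iff forall_2)
  thus thesis by (rule that)
qed

definition cube :: "real^2 \<Rightarrow> real^2" where
  "cube p = (\<chi> i. (p$i)^3)"

lemma cube_eq_0_iff: "cube p = 0 \<longleftrightarrow> p = 0"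
  by (simp add: cube_def vec_eq_iff)

lemma l4pow_smooth_point:
  assumes "l4pow p = 1" "p$1 * p$2 \<noteq> 0" "\<And>s. l4pow (p + s *\<^sub>R q) \<le> 1 + s^4"
  shows "q = 0"
proof -
  have "4*((p$1)^3*q$1 + (p$2)^3*q$2) * s + 6*((p$1*q$1)^2 + (p$2*q$2)^2) * s^2
      + 4*(p$1*(q$1)^3 + p$2*(q$2)^3) * s^3 + (l4pow q - 1) * s^4 \<le> 0" for s
  proof -
    have "l4pow (p + s *\<^sub>R q) = (p$1 + s*q$1)^4 + (p$2 + s*q$2)^4"
      by (simp add: l4pow_def)
    also have "\<dots> = (1 + s^4) + 4*((p$1)^3*q$1 + (p$2)^3*q$2) * s
      + 6*((p$1*q$1)^2 + (p$2*q$2)^2) * s^2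
      + 4*(p$1*(q$1)^3 + p$2*(q$2)^3) * s^3 + (l4pow q - 1) * s^4 + (l4pow p - 1)"
      unfolding l4pow_def by algebra
    finally have "l4pow (p + s *\<^sub>R q) - (1 + s^4) = 4*((p$1)^3*q$1 + (p$2)^3*q$2) * s
      + 6*((p$1*q$1)^2 + (p$2*q$2)^2) * s^2
      + 4*(p$1*(q$1)^3 + p$2*(q$2)^3) * s^3 + (l4pow q - 1) * s^4 + (l4pow p - 1)"
      by simp
    thus ?thesis using assms(1) assms(3)[of s] by simp
  qed
  hence "6*((p$1*q$1)^2 + (p$2*q$2)^2) \<le> 0" by (rule quartic_nonpos_coeffs(2))
  hence "(p$1*q$1)^2 + (p$2*q$2)^2 \<le> 0" by simp
  thus "q = 0" using assms(2) by (simp add: sum_power2_le_zero_iff vec_eq_iff forall_2)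
qed

lemma norming_functional_eq_cube:
  assumes "\<And>v. (f \<bullet> v)^4 \<le> l4pow v" "l4pow p = 1" "f \<bullet> p = 1"
  shows "f = cube p"
proof -
  have "f \<bullet> z = cube p \<bullet> z" for z
  proof -
    define F where "F = f \<bullet> z"
    have "4*(F - (p$1)^3*z$1 - (p$2)^3*z$2) * s + 6*(F^2 - (p$1)^2*(z$1)^2 - (p$2)^2*(z$2)^2) * s^2
        + 4*(F^3 - p$1*(z$1)^3 - p$2*(z$2)^3) * s^3 + (F^4 - l4pow z) * s^4 \<le> 0" for s
    proof -
      have "f \<bullet> (p + s *\<^sub>R z) = 1 + s * F"
        using assms(3) by (simp add: F_def inner_add_right)
      hence "(1 + s * F)^4 - l4pow (p + s *\<^sub>R z) \<le> 0"
        using assms(1)[of "p + s *\<^sub>R z"] by simp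
      moreover have "(1 + s * F)^4 - l4pow (p + s *\<^sub>R z)
        = 4*(F - (p$1)^3*z$1 - (p$2)^3*z$2) * s + 6*(F^2 - (p$1)^2*(z$1)^2 - (p$2)^2*(z$2)^2) * s^2
        + 4*(F^3 - p$1*(z$1)^3 - p$2*(z$2)^3) * s^3 + (F^4 - l4pow z) * s^4 + (1 - l4pow p)"
        by (simp add: l4pow_def) algebra
      ultimately show ?thesis using assms(2) by simp
    qed
    hence "4*(F - (p$1)^3*z$1 - (p$2)^3*z$2) = 0" by (rule quartic_nonpos_coeffs(1))
    thus ?thesis by (simp add: F_def inner_real2 cube_def)
  qed
  thus ?thesis by (metis vector_eq_rdot)
qed

lemma unit_ball_eq_contractive: "{B. opnorm4 B \<le> 1} = Collect contractive"
  by (simp add: opnorm4_le_1_iff)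

lemma not_extreme_if_contractive_plus_minus:
  assumes "D \<noteq> 0" "contractive (A + D)" "contractive (A - D)"
  shows "\<not> A extreme_point_of Collect contractive"
proof
  assume "A extreme_point_of Collect contractive"
  moreover have "A - D \<noteq> A + D"
  proof
    assume "A - D = A + D"
    hence "2 *\<^sub>R D = 0" by (simp add: scaleR_2 algebra_simps)
    thus False using assms(1) by simp
  qed
  hence "midpoint (A - D) (A + D) \<in> open_segment (A - D) (A + D)" by simp
  moreover have "midpoint (A - D) (A + D) = A" by (simp add: midpoint_def scaleR_2[symmetric] algebra_simps)
  ultimately show False using assms(2,3) unfolding extreme_point_of_def by force
qed

lemma extreme_if_determined_by_norming_vector:
  assumes "contractive A" "l4pow w \<le> 1" "l4pow (A *v w) = 1"
    and determined: "\<And>B. contractive B \<Longrightarrow> B *v w = A *v w \<Longrightarrow> B = A"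
  shows "A extreme_point_of Collect contractive"
  unfolding extreme_point_of_def
proof (intro conjI ballI)
  show "A \<in> Collect contractive" using assms(1) by simp
  fix B C assume BC: "B \<in> Collect contractive" "C \<in> Collect contractive"
  show "A \<notin> open_segment B C"
  proof
    assume "A \<in> open_segment B C"
    then obtain u where u: "B \<noteq> C" "0 < u" "u < 1" "A = (1 - u) *\<^sub>R B + u *\<^sub>R C"
      by (auto simp: in_segment)
    have Aw: "A *v w = (1 - u) *\<^sub>R (B *v w) + u *\<^sub>R (C *v w)"
      by (simp add: u(4) matrix_vector_mult_add_rdistrib scaleR_matrix_vector_assoc)
    have "l4pow (B *v w) \<le> 1" "l4pow (C *v w) \<le> 1"
      using BC assms(2) by (auto simp: contractive_def intro: order_trans)
    hence "B *v w = C *v w"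
      using Aw assms(3) by (intro l4pow_strictly_convex[OF _ _ u(2,3)]) simp_all
    hence "B *v w = A *v w" "C *v w = A *v w"
      using Aw by (simp_all add: algebra_simps)
    thus False using determined BC u(1) by auto
  qed
qed

lemma quadratic_form_nonneg:
  fixes a b c x y :: real
  assumes "0 < a" "b^2 \<le> 4*a*c"
  shows "0 \<le> a*x^2 + b*x*y + c*y^2"
proof -
  have "4*a*(a*x^2 + b*x*y + c*y^2) = (2*a*x + b*y)^2 + (4*a*c - b^2)*y^2"
    by algebra
  also have "\<dots> \<ge> 0" using assms(2) by (intro add_nonneg_nonneg) auto
  finally show ?thesis using assms(1) by (simp add: zero_le_mult_iff)
qed

lemma eventually_quadratic_form_nonneg:
  fixes r11 r12 r22 :: "real \<Rightarrow> real"
  assumes "isCont r11 0" "isCont r12 0" "isCont r22 0"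
    and "0 < r11 0" "(r12 0)^2 < 4 * r11 0 * r22 0"
  shows "eventually (\<lambda>t. \<forall>x y. 0 \<le> r11 t * x^2 + r12 t * x * y + r22 t * y^2) (at 0)"
proof -
  have "((\<lambda>t. 4 * r11 t * r22 t - (r12 t)^2) \<longlongrightarrow> 4 * r11 0 * r22 0 - (r12 0)^2) (at 0)"
    using assms(1-3) unfolding isCont_def by (intro tendsto_intros)
  hence "eventually (\<lambda>t. 0 < 4 * r11 t * r22 t - (r12 t)^2) (at 0)"
    by (rule order_tendstoD(1)) (use assms(5) in simp)
  moreover have "eventually (\<lambda>t. 0 < r11 t) (at 0)"
    using assms(1,4) unfolding isCont_def by (rule order_tendstoD(1))
  ultimately show ?thesis
    by eventually_elim (auto intro!: quadratic_form_nonneg)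
qed

definition perp :: "real^2 \<Rightarrow> real^2" where
  "perp p = vector [p$2, - p$1]"

lemma perp_eq_0_iff: "perp p = 0 \<longleftrightarrow> p = 0"
  by (auto simp: perp_def vec_eq_iff forall_2)

lemma l4pow_add_tangent:
  "l4pow (c *\<^sub>R u + d *\<^sub>R perp (cube u)) = c^4 * l4pow u
     + 6*c^2*d^2*((u$1)^2*(u$2)^6 + (u$2)^2*(u$1)^6) + 4*c*d^3*(u$1*(u$2)^9 - u$2*(u$1)^9)
     + d^4*((u$1)^12 + (u$2)^12)"
  by (simp add: l4pow_def perp_def cube_def) algebra

lemma l4pow_split:
  fixes a b :: real
  defines "p \<equiv> vector [a, b]"
  assumes "a^4 + b^4 = 1"
  shows "l4pow v = (cube p \<bullet> v)^4 + (perp p \<bullet> v)^2 *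
    (b^2*(1+a^4+a^8)*(v$1)^2 + 2*a*b*(1+a^4*b^4)*(v$1)*(v$2) + a^2*(1+b^4+b^8)*(v$2)^2)"
proof -
  have "(x^4+y^4)*(a^4+b^4)^3 = (a^3*x+b^3*y)^4 + (b*x-a*y)^2 *
    (b^2*((a^4+b^4)^2+(a^4+b^4)*a^4+a^8)*x^2 + 2*a*b*((a^4+b^4)^2+a^4*b^4)*x*y
     + a^2*((a^4+b^4)^2+(a^4+b^4)*b^4+b^8)*y^2)" for x y
    by algebra
  note split = this[unfolded assms(2) power_one mult_1 mult_1_right]
  have "cube p \<bullet> v = a^3* v$1 + b^3* v$2" "perp p \<bullet> v = b* v$1 - a* v$2"
    by (simp_all add: p_def perp_def cube_def inner_real2)
  thus ?thesis
    unfolding l4pow_def by (simp only: split)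
qed

lemma split_form_pos_def:
  fixes a b :: real
  assumes "a^4 + b^4 = 1" "a * b \<noteq> 0"
  shows "0 < b^2*(1+a^4+a^8)"
    and "(2*a*b*(1+a^4*b^4))^2 < 4 * (b^2*(1+a^4+a^8)) * (a^2*(1+b^4+b^8))"
proof -
  show "0 < b^2*(1+a^4+a^8)" using assms(2) by (simp add: add_pos_nonneg)
  have "4 * (b^2*(1+a^4+a^8)) * (a^2*(1+b^4+b^8)) - (2*a*b*(1+a^4*b^4))^2
     = 4*(a*b)^2*((a^4+b^4) + (a^4)^2 + (b^4)^2 + a^4*b^4*(a^4+b^4) - a^4*b^4)"
    by algebra
  also have "\<dots> = 4*(a*b)^2*(1 + (a^4)^2 + (b^4)^2)" using assms(1) by simp
  also have "\<dots> > 0" using assms(2) by (simp add: add_pos_nonneg)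
  finally show "(2*a*b*(1+a^4*b^4))^2 < 4 * (b^2*(1+a^4+a^8)) * (a^2*(1+b^4+b^8))" by simp
qed

lemma eventually_contractive_perturbation:
  assumes u: "l4pow u = 1" and p: "l4pow p = 1" "p$1 * p$2 \<noteq> 0"
  shows "eventually (\<lambda>\<tau>. contractive (outer u (cube p) + \<tau> *\<^sub>R outer (perp (cube u)) (perp p))) (at 0)"
proof -
  define a b where "a = p$1" and "b = p$2"
  have p_eq: "p = vector [a, b]" and ab: "a^4 + b^4 = 1" "a * b \<noteq> 0"
    using p by (auto simp: a_def b_def vec_eq_iff forall_2 l4pow_def)
  define S2 S3 S4 where "S2 = (u$1)^2*(u$2)^6 + (u$2)^2*(u$1)^6"
    and "S3 = u$1*(u$2)^9 - u$2*(u$1)^9" and "S4 = (u$1)^12 + (u$2)^12"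
  define \<alpha> \<beta> \<gamma> where "\<alpha> = b^2*(1+a^4+a^8)" and "\<beta> = 2*a*b*(1+a^4*b^4)"
    and "\<gamma> = a^2*(1+b^4+b^8)"
  \<comment> \<open>Coefficients of the quadratic form \<open>Q - \<tau>\<^sup>2 K\<close> in \<open>v\<close>, where
    \<open>Q = \<alpha> v\<^sub>1\<^sup>2 + \<beta> v\<^sub>1 v\<^sub>2 + \<gamma> v\<^sub>2\<^sup>2\<close> is the slack factor of \<open>l4pow_split\<close> and \<open>\<tau>\<^sup>2 L\<^sup>2 K\<close> is
    the excess created by the perturbation.\<close>
  define r11 r12 r22 where
    "r11 = (\<lambda>\<tau>. \<alpha> - \<tau>^2*(6*S2*a^6 + 4*\<tau>*S3*a^3*b + \<tau>^2*S4*b^2))" and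
    "r12 = (\<lambda>\<tau>. \<beta> - \<tau>^2*(12*S2*a^3*b^3 + 4*\<tau>*S3*(b^4-a^4) - 2*\<tau>^2*S4*a*b))" and
    "r22 = (\<lambda>\<tau>. \<gamma> - \<tau>^2*(6*S2*b^6 - 4*\<tau>*S3*a*b^3 + \<tau>^2*S4*a^2))"
  have "eventually (\<lambda>\<tau>. \<forall>x y. 0 \<le> r11 \<tau> * x^2 + r12 \<tau> * x * y + r22 \<tau> * y^2) (at 0)"
    using split_form_pos_def[OF ab]
    by (intro eventually_quadratic_form_nonneg)
      (simp_all add: r11_def r12_def r22_def \<alpha>_def \<beta>_def \<gamma>_def)
  thus ?thesis
  proof eventually_elim
    case (elim \<tau>)
    show ?case
      unfolding contractive_def
    proof
      fix v :: "real^2"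
      define c L where "c = cube p \<bullet> v" and "L = perp p \<bullet> v"
      define K where "K = 6*S2*c^2 + 4*\<tau>*S3*c*L + \<tau>^2*S4*L^2"
      have "(outer u (cube p) + \<tau> *\<^sub>R outer (perp (cube u)) (perp p)) *v v
          = c *\<^sub>R u + (\<tau>*L) *\<^sub>R perp (cube u)"
        by (simp add: c_def L_def matrix_vector_mult_add_rdistrib flip: scaleR_matrix_vector_assoc)
      moreover have "l4pow (c *\<^sub>R u + (\<tau>*L) *\<^sub>R perp (cube u)) = c^4 + (\<tau>*L)^2 * K"
        unfolding l4pow_add_tangent u K_def S2_def S3_def S4_def by algebra
      ultimately have "l4pow ((outer u (cube p) + \<tau> *\<^sub>R outer (perp (cube u)) (perp p)) *v v)
          = c^4 + (\<tau>*L)^2 * K" by simp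
      moreover have "l4pow v = c^4 + L^2 * (\<alpha>*(v$1)^2 + \<beta>*(v$1)*(v$2) + \<gamma>*(v$2)^2)"
        using l4pow_split[OF ab(1)] by (simp add: c_def L_def p_eq \<alpha>_def \<beta>_def \<gamma>_def)
      moreover have "\<tau>^2 * K \<le> \<alpha>*(v$1)^2 + \<beta>*(v$1)*(v$2) + \<gamma>*(v$2)^2"
      proof -
        have "\<alpha>*(v$1)^2 + \<beta>*(v$1)*(v$2) + \<gamma>*(v$2)^2 - \<tau>^2 * K
            = r11 \<tau> * (v$1)^2 + r12 \<tau> * (v$1) * (v$2) + r22 \<tau> * (v$2)^2"
          by (simp add: K_def c_def L_def r11_def r12_def r22_def p_eq perp_def cube_def inner_real2)
            algebra
        thus ?thesis using elim by (metis diff_ge_0_iff_ge)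
      qed
      hence "L^2 * (\<tau>^2 * K) \<le> L^2 * (\<alpha>*(v$1)^2 + \<beta>*(v$1)*(v$2) + \<gamma>*(v$2)^2)"
        by (rule mult_left_mono) simp
      ultimately show "l4pow ((outer u (cube p) + \<tau> *\<^sub>R outer (perp (cube u)) (perp p)) *v v) \<le> l4pow v"
        by (simp add: power_mult_distrib mult_ac)
    qed
  qed
qed

lemma not_extreme_outer_cube:
  assumes "l4pow u = 1" "l4pow p = 1" "p$1 * p$2 \<noteq> 0"
  shows "\<not> outer u (cube p) extreme_point_of Collect contractive"
proof -
  let ?D = "outer (perp (cube u)) (perp p)"
  obtain d where "d > 0"
    and d: "\<And>\<tau>. \<tau> \<noteq> 0 \<Longrightarrow> \<bar>\<tau>\<bar> < d \<Longrightarrow> contractive (outer u (cube p) + \<tau> *\<^sub>R ?D)"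
    using eventually_contractive_perturbation[OF assms] by (auto simp: eventually_at dist_real_def)
  define t where "t = d/2"
  have t: "t \<noteq> 0" "\<bar>t\<bar> < d" "\<bar>-t\<bar> < d" using \<open>d > 0\<close> by (simp_all add: t_def)
  have "u \<noteq> 0" "p \<noteq> 0" using assms(1,2) by (auto simp: l4pow_def)
  hence "t *\<^sub>R ?D \<noteq> 0" using t(1) by (simp add: outer_eq_0_iff cube_eq_0_iff perp_eq_0_iff)
  moreover have "contractive (outer u (cube p) + t *\<^sub>R ?D)" using d t by blast
  moreover have "contractive (outer u (cube p) - t *\<^sub>R ?D)" using d[of "-t"] t by simp
  ultimately show ?thesis by (rule not_extreme_if_contractive_plus_minus)
qed

definition column_matrix :: "2 \<Rightarrow> real \<Rightarrow> real \<Rightarrow> real^2^2" where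
  "column_matrix k x y = (\<chi> i j. if j = k then (if i = 1 then x else y) else 0)"

lemma column_matrix_eq_outer: "column_matrix k x y = outer (vector [x, y]) (axis k 1)"
  by (simp add: column_matrix_def outer_def axis_def vec_eq_iff forall_2)

lemma outer_cube_is_column_matrix:
  fixes j k :: 2
  assumes "j \<noteq> k" "p$j = 0" "l4pow p = 1" "l4pow u = 1"
  shows "outer u (cube p) = column_matrix k ((p$k)^3 * u$1) ((p$k)^3 * u$2)"
    and "((p$k)^3 * u$1)^4 + ((p$k)^3 * u$2)^4 = 1"
proof -
  have "cube p $ i = ((p$k)^3 *\<^sub>R axis k 1) $ i" for i
    using assms(1,2) index_cases[OF assms(1), of i] by (auto simp: cube_def axis_def)
  hence "cube p = (p$k)^3 *\<^sub>R axis k 1" by (simp add: vec_eq_iff)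
  thus "outer u (cube p) = column_matrix k ((p$k)^3 * u$1) ((p$k)^3 * u$2)"
    by (simp add: column_matrix_def outer_def axis_def vec_eq_iff forall_2)
  have "(p$k)^4 = 1" using assms(2,3) l4pow_other_index[OF assms(1)] by simp
  moreover have "((p$k)^3 * u$1)^4 + ((p$k)^3 * u$2)^4 = ((p$k)^4)^3 * l4pow u"
    unfolding l4pow_def by algebra
  ultimately show "((p$k)^3 * u$1)^4 + ((p$k)^3 * u$2)^4 = 1" using assms(4) by simp
qed

lemma contractive_determined_by_smooth_column:
  fixes B :: "real^2^2"
  assumes "contractive B" "l4pow p = 1" "p$1 * p$2 \<noteq> 0" "B *v axis k 1 = p"
  shows "B = outer p (axis k 1)"
proof -
  obtain j where j: "j \<noteq> k" by (rule other_index)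
  have Bj: "B *v axis j 1 = 0"
  proof (rule l4pow_smooth_point[OF assms(2,3)])
    fix s :: real
    have "B *v (axis k 1 + s *\<^sub>R axis j 1) = p + s *\<^sub>R (B *v axis j 1)"
      by (simp add: assms(4) matrix_vector_right_distrib matrix_vector_mult_scaleR)
    moreover have "l4pow (axis k 1 + s *\<^sub>R axis j 1) = 1 + s^4"
      using j by (simp add: l4pow_other_index[OF j] axis_def)
    moreover have "l4pow (B *v (axis k 1 + s *\<^sub>R axis j 1)) \<le> l4pow (axis k 1 + s *\<^sub>R axis j 1)"
      using assms(1) by (simp add: contractive_def)
    ultimately show "l4pow (p + s *\<^sub>R (B *v axis j 1)) \<le> 1 + s^4" by simp
  qed
  have "B *v v = outer p (axis k 1) *v v" for v
  proof -
    have "v = v$k *\<^sub>R axis k 1 + v$j *\<^sub>R axis j 1"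
    proof (rule vec_eq_iff[THEN iffD2], rule allI)
      fix i
      show "v$i = (v$k *\<^sub>R axis k 1 + v$j *\<^sub>R axis j 1) $ i"
        using j index_cases[OF j, of i] by (auto simp: axis_def)
    qed
    hence "B *v v = B *v (v$k *\<^sub>R axis k 1 + v$j *\<^sub>R axis j 1)"
      by (rule arg_cong)
    also have "\<dots> = v$k *\<^sub>R p"
      by (simp add: matrix_vector_right_distrib matrix_vector_mult_scaleR assms(4) Bj)
    finally show ?thesis by (simp add: inner_axis')
  qed
  thus ?thesis by (simp add: matrix_eq)
qed

lemma column_matrix_rank_one_extreme:
  assumes "x * y \<noteq> 0" "x^4 + y^4 = 1"
  shows "rank (column_matrix k x y) = 1 \<and> extreme_contraction (column_matrix k x y)"
proof -
  let ?p = "vector [x, y] :: real^2"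
  let ?A = "outer ?p (axis k 1)"
  have p: "l4pow ?p = 1" "?p$1 * ?p$2 \<noteq> 0" using assms by (simp_all add: l4pow_def)
  have "?p$1 \<noteq> 0" using p(2) by auto
  hence "?p \<noteq> 0" by (metis zero_index)
  hence "rank ?A = 1" by (intro rank_outer) simp_all
  have contr: "contractive ?A"
    unfolding contractive_def using p(1) by (simp add: l4pow_scaleR inner_axis' component_pow4_le_l4pow)
  have ek: "l4pow (axis k 1) = 1" using exhaust_2[of k] by (auto simp: l4pow_def axis_def)
  have Aek: "l4pow (?A *v axis k 1) = 1" using p(1) by (simp add: inner_axis_axis)
  have "?A extreme_point_of Collect contractive"
  proof (rule extreme_if_determined_by_norming_vector[OF contr _ Aek])
    show "l4pow (axis k 1) \<le> 1" using ek by simp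
    fix B assume "contractive B" "B *v axis k 1 = ?A *v axis k 1"
    thus "B = ?A" by (intro contractive_determined_by_smooth_column[OF _ p]) (simp_all add: inner_axis_axis)
  qed
  moreover have "opnorm4 ?A = 1"
    unfolding opnorm4_eq_1_iff using contr ek Aek by blast
  ultimately show ?thesis
    using \<open>rank ?A = 1\<close>
    by (simp add: column_matrix_eq_outer extreme_contraction_def unit_ball_eq_contractive)
qed

lemma column_matrix_not_extreme_if_degenerate:
  assumes "x * y = 0" "x^4 + y^4 = 1"
  shows "\<not> column_matrix k x y extreme_point_of Collect contractive"
proof -
  obtain j where j: "j \<noteq> k" by (rule other_index)
  have iso: "l4pow ((column_matrix k x y + \<sigma> *\<^sub>R column_matrix j y x) *v v) = l4pow v"
    if "\<sigma>^4 = 1" for \<sigma> v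
  proof -
    have "(column_matrix k x y + \<sigma> *\<^sub>R column_matrix j y x) *v v
        = vector [x * v$k + \<sigma> * y * v$j, y * v$k + \<sigma> * x * v$j]"
      by (simp add: column_matrix_eq_outer inner_axis' matrix_vector_mult_add_rdistrib vec_eq_iff forall_2
          flip: scaleR_matrix_vector_assoc)
    thus ?thesis
      using assms that l4pow_other_index[OF j, of v]
      by (auto simp: l4pow_def power_mult_distrib algebra_simps)
  qed
  have "vector [y, x] \<noteq> (0::real^2)"
    using assms(2) by (auto simp: vec_eq_iff forall_2)
  hence "column_matrix j y x \<noteq> 0"
    by (simp add: column_matrix_eq_outer outer_eq_0_iff)
  moreover have "contractive (column_matrix k x y + column_matrix j y x)"
    using iso[of 1] by (simp add: contractive_def)
  moreover have "contractive (column_matrix k x y - column_matrix j y x)"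
    using iso[of "-1"] by (simp add: contractive_def)
  ultimately show ?thesis by (rule not_extreme_if_contractive_plus_minus)
qed

lemma rank_one_norm_one_imp_outer_cube:
  fixes A :: "real^2^2"
  assumes "rank A = 1" "opnorm4 A = 1"
  obtains u p where "l4pow u = 1" "l4pow p = 1" "A = outer u (cube p)"
proof -
  obtain u f where A: "A = outer u f" using assms(1) by (rule rank_one_imp_outer)
  obtain v0 where v0: "l4pow v0 = 1" "l4pow (A *v v0) = 1" and "contractive A"
    using assms(2) opnorm4_eq_1_iff by blast
  have Av: "l4pow (A *v v) = (f \<bullet> v)^4 * l4pow u" for v by (simp add: A l4pow_scaleR)
  define c where "c = f \<bullet> v0"
  have c4: "c^4 * l4pow u = 1" using Av v0(2) by (simp add: c_def)
  hence "c \<noteq> 0" by auto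
  have "(1/c) *\<^sub>R f = cube v0"
  proof (rule norming_functional_eq_cube)
    fix v
    have "((1/c) *\<^sub>R f \<bullet> v)^4 = (f \<bullet> v)^4 * l4pow u"
      using c4 \<open>c \<noteq> 0\<close> by (simp add: power_divide field_simps)
    thus "((1/c) *\<^sub>R f \<bullet> v)^4 \<le> l4pow v"
      using \<open>contractive A\<close> Av by (simp add: contractive_def)
  qed (use v0 \<open>c \<noteq> 0\<close> in \<open>simp_all add: c_def\<close>)
  moreover have "l4pow (c *\<^sub>R u) = 1" using c4 by (simp add: l4pow_scaleR)
  ultimately show thesis
    using that[of "c *\<^sub>R u" v0] v0(1) outer_rescale[OF \<open>c \<noteq> 0\<close>] A by metis
qed

lemma rank_one_extreme_contraction_is_column_matrix:
  assumes "rank A = 1" "extreme_contraction A"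
  obtains k x y where "x * y \<noteq> 0" "x^4 + y^4 = 1" "A = column_matrix k x y"
proof -
  have ext: "A extreme_point_of Collect contractive" and "opnorm4 A = 1"
    using assms(2) by (simp_all add: extreme_contraction_def unit_ball_eq_contractive)
  obtain u p where up: "l4pow u = 1" "l4pow p = 1" and A: "A = outer u (cube p)"
    using assms(1) \<open>opnorm4 A = 1\<close> by (rule rank_one_norm_one_imp_outer_cube)
  have "p$1 * p$2 = 0" using not_extreme_outer_cube[OF up] ext A by blast
  then obtain j where "p$j = 0" by auto
  obtain k where "k \<noteq> j" using other_index by metis
  note column = outer_cube_is_column_matrix[OF \<open>k \<noteq> j\<close>[symmetric] \<open>p$j = 0\<close> up(2,1)]
  show thesis
    using that column ext column_matrix_not_extreme_if_degenerate[OF _ column(2)] A by metis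
qed

theorem mainTheorem12:
  fixes A :: "real^2^2"
  shows "(rank A = 1 \<and> extreme_contraction A) \<longleftrightarrow>
    (\<exists>x1 y1. x1 * y1 \<noteq> 0 \<and> x1^4 + y1^4 = 1 \<and>
       (A = (\<chi> i j. if j = 1 then (if i = 1 then x1 else y1) else 0) \<or>
        A = (\<chi> i j. if j = 2 then (if i = 1 then x1 else y1) else 0)))"
proof -
  have "rank A = 1 \<and> extreme_contraction A \<longleftrightarrow>
    (\<exists>k x y. x * y \<noteq> 0 \<and> x^4 + y^4 = 1 \<and> A = column_matrix k x y)"
    using column_matrix_rank_one_extreme
    by (blast elim: rank_one_extreme_contraction_is_column_matrix)
  also have "\<dots> \<longleftrightarrow> (\<exists>x y. x * y \<noteq> 0 \<and> x^4 + y^4 = 1 \<and>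
      (A = column_matrix 1 x y \<or> A = column_matrix 2 x y))"
    unfolding exists_2 by blast
  finally show ?thesis by (simp only: column_matrix_def)
qed

end
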